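(* There exist instances of the multi-agent contract model (described in the context) with subadditive reward functions and $n$ agents whose price of equality is $\Omega(\sqrt{n})$.
   Context: Model: principal and agents $A=[n]$; each agent $i$ has a finite action set $T_i$ (pairwise disjoint), $T=\bigsqcup_iT_i$, costs $c_j\ge0$, $c(S_i)=\sum_{j\in S_i}c_j$. Reward $f:2^T\to[0,1]$ monotone, $f(\emptyset)=0$; $f$ is subadditive if $f(S)+f(S')\ge f(S\cup S')$. Contract $\boldsymbol{\alpha}\in[0,1]^A$; agent $i$'s utility $\alpha_if(S)-c(S\cap T_i)$; $S\in\mathsf{NE}(\boldsymbol{\alpha})$ (pure Nash equilibrium) if no agent can gain by changing her own subset of actions. Principal's utility $(1-\sum_i\alpha_i)f(S)$. A contract is equal-pay if all its nonzero entries are equal. The price of equality of an instance is $\dfrac{\max_{\boldsymbol{\alpha},\,S\in\mathsf{NE}(\boldsymbol{\alpha})}(1-\sum_i\alpha_i)f(S)}{\max_{\boldsymbol{\alpha}\text{ equal-pay},\,S\in\mathsf{NE}(\boldsymbol{\alpha})}(1-\sum_i\alpha_i)f(S)}$. *)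

theory Defs
  imports Complex_Main
begin

text \<open>An instance: n agents indexed 0..<n; a finite set T of actions (of type nat);
  owner j is the agent owning action j (so T_i = {j \<in> T. owner j = i}, pairwise disjoint);
  costs c; reward f on subsets of T.\<close>

definition actions_of :: "nat set \<Rightarrow> (nat \<Rightarrow> nat) \<Rightarrow> nat \<Rightarrow> nat set" where
  "actions_of T owner i = {j \<in> T. owner j = i}"

definition cost :: "(nat \<Rightarrow> real) \<Rightarrow> nat set \<Rightarrow> real" where
  "cost c S = (\<Sum>j\<in>S. c j)"

definition valid_instance ::
  "nat \<Rightarrow> nat set \<Rightarrow> (nat \<Rightarrow> nat) \<Rightarrow> (nat \<Rightarrow> real) \<Rightarrow> (nat set \<Rightarrow> real) \<Rightarrow> bool" where
  "valid_instance n T owner c f \<longleftrightarrow>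
     finite T \<and> (\<forall>j\<in>T. owner j < n) \<and> (\<forall>j\<in>T. c j \<ge> 0) \<and>
     f {} = 0 \<and> (\<forall>S. S \<subseteq> T \<longrightarrow> 0 \<le> f S \<and> f S \<le> 1) \<and>
     (\<forall>S S'. S \<subseteq> S' \<and> S' \<subseteq> T \<longrightarrow> f S \<le> f S')"

definition subadditive_on :: "nat set \<Rightarrow> (nat set \<Rightarrow> real) \<Rightarrow> bool" where
  "subadditive_on T f \<longleftrightarrow> (\<forall>S S'. S \<subseteq> T \<and> S' \<subseteq> T \<longrightarrow> f (S \<union> S') \<le> f S + f S')"

definition is_contract :: "nat \<Rightarrow> (nat \<Rightarrow> real) \<Rightarrow> bool" where
  "is_contract n \<alpha> \<longleftrightarrow> (\<forall>i<n. 0 \<le> \<alpha> i \<and> \<alpha> i \<le> 1) \<and> (\<forall>i\<ge>n. \<alpha> i = 0)"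

definition equal_pay :: "nat \<Rightarrow> (nat \<Rightarrow> real) \<Rightarrow> bool" where
  "equal_pay n \<alpha> \<longleftrightarrow> (\<forall>i<n. \<forall>k<n. \<alpha> i \<noteq> 0 \<and> \<alpha> k \<noteq> 0 \<longrightarrow> \<alpha> i = \<alpha> k)"

definition agent_utility ::
  "nat set \<Rightarrow> (nat \<Rightarrow> nat) \<Rightarrow> (nat \<Rightarrow> real) \<Rightarrow> (nat set \<Rightarrow> real) \<Rightarrow> (nat \<Rightarrow> real) \<Rightarrow> nat \<Rightarrow> nat set \<Rightarrow> real" where
  "agent_utility T owner c f \<alpha> i S = \<alpha> i * f S - cost c (S \<inter> actions_of T owner i)"

definition is_NE ::
  "nat \<Rightarrow> nat set \<Rightarrow> (nat \<Rightarrow> nat) \<Rightarrow> (nat \<Rightarrow> real) \<Rightarrow> (nat set \<Rightarrow> real) \<Rightarrow> (nat \<Rightarrow> real) \<Rightarrow> nat set \<Rightarrow> bool" where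
  "is_NE n T owner c f \<alpha> S \<longleftrightarrow> S \<subseteq> T \<and>
     (\<forall>i<n. \<forall>S'. S' \<subseteq> actions_of T owner i \<longrightarrow>
        agent_utility T owner c f \<alpha> i ((S - actions_of T owner i) \<union> S')
          \<le> agent_utility T owner c f \<alpha> i S)"

definition principal_utility :: "nat \<Rightarrow> (nat set \<Rightarrow> real) \<Rightarrow> (nat \<Rightarrow> real) \<Rightarrow> nat set \<Rightarrow> real" where
  "principal_utility n f \<alpha> S = (1 - (\<Sum>i<n. \<alpha> i)) * f S"

text \<open>Optimal principal utility over all contracts / over equal-pay contracts
  (the maxima of the paper, written as suprema; both sets are nonempty and bounded by 1).\<close>
definition opt_all ::
  "nat \<Rightarrow> nat set \<Rightarrow> (nat \<Rightarrow> nat) \<Rightarrow> (nat \<Rightarrow> real) \<Rightarrow> (nat set \<Rightarrow> real) \<Rightarrow> real" where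
  "opt_all n T owner c f = Sup {principal_utility n f \<alpha> S | \<alpha> S.
      is_contract n \<alpha> \<and> is_NE n T owner c f \<alpha> S}"

definition opt_equal ::
  "nat \<Rightarrow> nat set \<Rightarrow> (nat \<Rightarrow> nat) \<Rightarrow> (nat \<Rightarrow> real) \<Rightarrow> (nat set \<Rightarrow> real) \<Rightarrow> real" where
  "opt_equal n T owner c f = Sup {principal_utility n f \<alpha> S | \<alpha> S.
      is_contract n \<alpha> \<and> equal_pay n \<alpha> \<and> is_NE n T owner c f \<alpha> S}"

end

theory Submission
  imports Defs
begin

text \<open>Agents \<open>0, ..., m - 1\<close> are cheap and agent \<open>m\<close> is expensive. With \<open>x \<ge> 1\<close> cheap
  agents working the reward is \<open>U + l (x - 1)\<close>, and the expensive agent adds \<open>U - l\<close> to it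
  only once all cheap agents work (alone she produces \<open>U\<close>). Paying the expensive agent
  \<open>1/2\<close> and each cheap agent \<open>1/(4m)\<close> makes everybody work and leaves the principal a
  quarter of a reward of order \<open>m l\<close>. Under equal pay, motivating the expensive agent forces
  a share of \<open>1/2\<close> for everybody, hence no profit; without her, a cheap agent contributes
  only \<open>l\<close> at the margin, so each working one needs a share of at least \<open>U/(4ml)\<close>, which
  limits their number to \<open>4ml/U\<close> and the reward to \<open>U + 4ml\<^sup>2/U\<close>. For
  \<open>U = 1/sqrt n\<close> and \<open>l = 1/(4n)\<close> the optimal profit is bounded below by a constant while
  the equal-pay profit is \<open>O(1/sqrt n)\<close>.\<close>

lemma principal_utility_le_reward:
  assumes "0 \<le> (\<Sum>i<n. \<alpha> i)" "0 \<le> f S"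
  shows "principal_utility n f \<alpha> S \<le> f S"
  using assms unfolding principal_utility_def by (simp add: algebra_simps)

lemma principal_utility_nonpos:
  assumes "1 \<le> (\<Sum>i<n. \<alpha> i)" "0 \<le> f S"
  shows "principal_utility n f \<alpha> S \<le> 0"
  using assms unfolding principal_utility_def by (simp add: mult_nonpos_nonneg)

lemma contract_sum_nonneg: "is_contract n \<alpha> \<Longrightarrow> 0 \<le> (\<Sum>i<n. \<alpha> i)"
  unfolding is_contract_def by (intro sum_nonneg) auto

lemma NE_reward_nonneg:
  "valid_instance n T owner c f \<Longrightarrow> is_NE n T owner c f \<alpha> S \<Longrightarrow> 0 \<le> f S"
  unfolding valid_instance_def is_NE_def by blast

lemma principal_utility_le_opt_all:
  assumes inst: "valid_instance n T owner c f"
    and "is_contract n \<alpha>" "is_NE n T owner c f \<alpha> S"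
  shows "principal_utility n f \<alpha> S \<le> opt_all n T owner c f"
proof -
  have "principal_utility n f \<beta> S' \<le> 1"
    if "is_contract n \<beta>" "is_NE n T owner c f \<beta> S'" for \<beta> S'
  proof -
    have "S' \<subseteq> T" using that(2) unfolding is_NE_def by blast
    then have "f S' \<le> 1" using inst unfolding valid_instance_def by blast
    moreover have "principal_utility n f \<beta> S' \<le> f S'"
      using that inst by (intro principal_utility_le_reward contract_sum_nonneg NE_reward_nonneg)
    ultimately show ?thesis by linarith
  qed
  then have "bdd_above {principal_utility n f \<beta> S' | \<beta> S'.
      is_contract n \<beta> \<and> is_NE n T owner c f \<beta> S'}"
    by (intro bdd_aboveI[of _ 1]) blast
  then show ?thesis unfolding opt_all_def using assms by (intro cSup_upper) blast+
qed

lemma zero_contract_empty_NE: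
  assumes "valid_instance n T owner c f"
  shows "is_NE n T owner c f (\<lambda>_. 0) {}"
proof -
  have "0 \<le> cost c (S' \<inter> actions_of T owner i)" for S' i
    using assms unfolding cost_def valid_instance_def actions_of_def by (intro sum_nonneg) auto
  then show ?thesis unfolding is_NE_def agent_utility_def by (simp add: cost_def)
qed

lemma opt_equal_le_if_NE_utility_le:
  assumes "valid_instance n T owner c f"
    and "\<And>\<alpha> S. is_contract n \<alpha> \<Longrightarrow> equal_pay n \<alpha> \<Longrightarrow> is_NE n T owner c f \<alpha> S \<Longrightarrow>
           principal_utility n f \<alpha> S \<le> B"
  shows "opt_equal n T owner c f \<le> B"
proof -
  have "is_contract n (\<lambda>_. 0)" "equal_pay n (\<lambda>_. 0)"
    unfolding is_contract_def equal_pay_def by auto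
  with zero_contract_empty_NE[OF assms(1)] show ?thesis
    unfolding opt_equal_def using assms(2) by (intro cSup_least) blast+
qed

lemma is_NE_single_action_iff:
  "is_NE n {..<n} id c f \<alpha> S \<longleftrightarrow> S \<subseteq> {..<n} \<and>
     (\<forall>i\<in>S. c i \<le> \<alpha> i * (f S - f (S - {i}))) \<and>
     (\<forall>i<n. i \<notin> S \<longrightarrow> \<alpha> i * (f (insert i S) - f S) \<le> c i)"
proof -
  have actions: "actions_of {..<n} id i = {i}" if "i < n" for i
    using that unfolding actions_of_def by auto
  have subsets: "S' \<subseteq> {i} \<longleftrightarrow> S' = {} \<or> S' = {i}" for S' and i :: nat
    by blast
  show ?thesis
    unfolding is_NE_def agent_utility_def
    by (auto simp: actions subsets cost_def insert_absorb algebra_simps Int_insert_right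
        split: if_splits)
qed

lemma NE_single_action_subset: "is_NE n {..<n} id c f \<alpha> S \<Longrightarrow> S \<subseteq> {..<n}"
  by (simp add: is_NE_single_action_iff)

lemma NE_single_action_removal:
  "is_NE n {..<n} id c f \<alpha> S \<Longrightarrow> i \<in> S \<Longrightarrow> c i \<le> \<alpha> i * (f S - f (S - {i}))"
  by (simp add: is_NE_single_action_iff)

locale sqrt_gap_instance =
  fixes m :: nat and U l :: real
  assumes two_le_m: "2 \<le> m" and l_pos: "0 < l" and l_less_U: "l < U"
    and top_reward_le_one: "2 * U + l * (real m - 2) \<le> 1"
begin

definition reward_count :: "nat \<Rightarrow> bool \<Rightarrow> real" where
  "reward_count x b =
     (if x = 0 then (if b then U else 0)
      else if x < m then U + l * (real x - 1)
      else if b then 2 * U + l * (real m - 2) else U + l * (real m - 1))"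

definition cheap_count :: "nat set \<Rightarrow> nat" where
  "cheap_count S = card (S \<inter> {..<m})"

definition reward :: "nat set \<Rightarrow> real" where
  "reward S = reward_count (cheap_count S) (m \<in> S)"

definition action_cost :: "nat \<Rightarrow> real" where
  "action_cost j = (if j = m then (U - l) / 2 else U / (4 * real m))"

lemma reward_count_pos:
  "0 < x \<Longrightarrow> x \<le> m \<Longrightarrow>
     reward_count x b = U + l * (real x - 1) + (if x = m \<and> b then U - l else 0)"
  unfolding reward_count_def by (auto simp: algebra_simps)

lemma reward_count_zero: "reward_count 0 b = (if b then U else 0)"
  unfolding reward_count_def by simp

lemma reward_count_mono:
  assumes "x \<le> x'" "x' \<le> m" "b \<longrightarrow> b'"
  shows "reward_count x b \<le> reward_count x' b'"
proof (cases "x = 0")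
  case True
  show ?thesis
  proof (cases "x' = 0")
    case False
    have "0 \<le> l * (real x' - 1)" using False l_pos by simp
    then show ?thesis
      using True False assms l_pos l_less_U by (simp add: reward_count_zero reward_count_pos)
  qed (use True assms l_pos l_less_U in \<open>simp add: reward_count_zero\<close>)
next
  case False
  have "l * (real x - 1) \<le> l * (real x' - 1)"
    using assms l_pos by (simp add: mult_left_mono)
  moreover have "(if x = m \<and> b then U - l else 0) \<le> (if x' = m \<and> b' then U - l else 0)"
    using assms l_less_U by auto
  ultimately show ?thesis
    using False assms by (simp add: reward_count_pos)
qed

lemma reward_count_subadditive:
  assumes "x1 \<le> x" "x2 \<le> x" "x \<le> x1 + x2" "x \<le> m"
  shows "reward_count x (b1 \<or> b2) \<le> reward_count x1 b1 + reward_count x2 b2"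
proof -
  have lower: "U + l * (real y - 1) \<le> reward_count y b" if "0 < y" "y \<le> m" for y b
    using that l_less_U by (simp add: reward_count_pos)
  consider "x1 = 0" | "x2 = 0" | "0 < x1" "0 < x2" by blast
  then show ?thesis
  proof cases
    case 1
    then show ?thesis
      using assms l_pos l_less_U lower[of x b2]
      by (cases "x = 0") (auto simp: reward_count_zero reward_count_pos)
  next
    case 2
    then show ?thesis
      using assms l_pos l_less_U lower[of x b1]
      by (cases "x = 0") (auto simp: reward_count_zero reward_count_pos)
  next
    case 3
    have "reward_count x (b1 \<or> b2) \<le> 2 * U + l * (real x - 2)"
      using assms 3 l_less_U by (simp add: reward_count_pos algebra_simps)
    moreover have "l * (real x - 2) \<le> l * (real x1 - 1) + l * (real x2 - 1)"
      using assms l_pos by (simp add: mult_left_mono flip: distrib_left)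
    ultimately show ?thesis
      using assms 3 lower[of x1 b1] lower[of x2 b2] by linarith
  qed
qed

lemma cheap_count_le: "cheap_count S \<le> m"
  unfolding cheap_count_def by (metis card_lessThan card_mono finite_lessThan inf_le2)

lemma reward_nonneg: "0 \<le> reward S"
  using reward_count_mono[of 0 "cheap_count S" False "m \<in> S"] cheap_count_le
  unfolding reward_def by (simp add: reward_count_def)

lemma reward_le_one: "reward S \<le> 1"
  using reward_count_mono[of "cheap_count S" m "m \<in> S" True] cheap_count_le two_le_m
    top_reward_le_one
  unfolding reward_def by (simp add: reward_count_def)

lemma valid_instance: "valid_instance (Suc m) {..<Suc m} id action_cost reward"
proof -
  have "reward S \<le> reward S'" if "S \<subseteq> S'" for S S'
  proof -
    have "cheap_count S \<le> cheap_count S'"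
      unfolding cheap_count_def using that by (intro card_mono) auto
    then show ?thesis
      unfolding reward_def using that cheap_count_le by (intro reward_count_mono) auto
  qed
  moreover have "reward {} = 0" by (simp add: reward_def cheap_count_def reward_count_def)
  moreover have "0 \<le> action_cost j" for j
    using l_less_U l_pos two_le_m by (simp add: action_cost_def)
  ultimately show ?thesis
    unfolding valid_instance_def using reward_nonneg reward_le_one by auto
qed

lemma subadditive: "subadditive_on {..<Suc m} reward"
  unfolding subadditive_on_def
proof (intro allI impI)
  fix S S' :: "nat set"
  have "cheap_count (S \<union> S') \<le> cheap_count S + cheap_count S'"
    unfolding cheap_count_def by (metis Int_Un_distrib2 card_Un_le)
  moreover have "cheap_count S \<le> cheap_count (S \<union> S')" "cheap_count S' \<le> cheap_count (S \<union> S')"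
    unfolding cheap_count_def by (auto intro: card_mono)
  ultimately show "reward (S \<union> S') \<le> reward S + reward S'"
    unfolding reward_def using reward_count_subadditive cheap_count_le by simp
qed

lemma cheap_count_full: "cheap_count {..<Suc m} = m"
  unfolding cheap_count_def by (simp add: Int_absorb1)

lemma cheap_count_remove_expensive: "cheap_count (S - {m}) = cheap_count S"
proof -
  have "(S - {m}) \<inter> {..<m} = S \<inter> {..<m}" by auto
  then show ?thesis unfolding cheap_count_def by simp
qed

lemma cheap_count_remove_cheap: "i \<in> S \<Longrightarrow> i < m \<Longrightarrow> cheap_count (S - {i}) = cheap_count S - 1"
proof -
  assume "i \<in> S" "i < m"
  then have "(S - {i}) \<inter> {..<m} = (S \<inter> {..<m}) - {i}" "i \<in> S \<inter> {..<m}" by auto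
  then show ?thesis unfolding cheap_count_def by simp
qed

lemma cheap_count_eq_m: "cheap_count S = m \<Longrightarrow> {..<m} \<subseteq> S"
  unfolding cheap_count_def using card_subset_eq[of "{..<m}" "S \<inter> {..<m}"] by auto

lemma reward_full: "reward {..<Suc m} = 2 * U + l * (real m - 2)"
  using two_le_m by (simp add: reward_def cheap_count_full reward_count_pos algebra_simps)

lemma reward_full_remove_expensive: "reward ({..<Suc m} - {m}) = U + l * (real m - 1)"
  using two_le_m
  by (simp add: reward_def cheap_count_remove_expensive cheap_count_full reward_count_pos)

lemma reward_full_remove_cheap: "i < m \<Longrightarrow> reward ({..<Suc m} - {i}) = U + l * (real m - 2)"
proof -
  assume "i < m"
  then have "cheap_count ({..<Suc m} - {i}) = m - 1"
    by (simp add: cheap_count_remove_cheap cheap_count_full)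
  moreover have "m - 1 \<noteq> m" "real (m - 1) = real m - 1" using two_le_m by auto
  ultimately show ?thesis
    using two_le_m by (simp add: reward_def reward_count_pos algebra_simps)
qed

definition unequal_contract :: "nat \<Rightarrow> real" where
  "unequal_contract i = (if i = m then 1/2 else if i < m then 1 / (4 * real m) else 0)"

lemma unequal_contract_is_contract: "is_contract (Suc m) unequal_contract"
  unfolding is_contract_def unequal_contract_def using two_le_m by auto

lemma unequal_contract_NE:
  "is_NE (Suc m) {..<Suc m} id action_cost reward unequal_contract {..<Suc m}"
proof -
  have "action_cost i \<le> unequal_contract i * (reward {..<Suc m} - reward ({..<Suc m} - {i}))"
    if "i < Suc m" for i
  proof (cases "i = m")
    case True
    then show ?thesis
      by (simp add: action_cost_def unequal_contract_def reward_full reward_full_remove_expensive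
          algebra_simps)
  next
    case False
    then show ?thesis
      using that by (simp add: action_cost_def unequal_contract_def reward_full
          reward_full_remove_cheap)
  qed
  then show ?thesis by (simp add: is_NE_single_action_iff)
qed

lemma unequal_contract_utility:
  "principal_utility (Suc m) reward unequal_contract {..<Suc m} = (2 * U + l * (real m - 2)) / 4"
proof -
  have "(\<Sum>i<m. unequal_contract i) = 1/4"
    using two_le_m by (simp add: unequal_contract_def)
  then have "(\<Sum>i<Suc m. unequal_contract i) = 3/4"
    by (simp add: unequal_contract_def)
  then show ?thesis by (simp add: principal_utility_def reward_full)
qed

lemma opt_all_lower_bound:
  "(2 * U + l * (real m - 2)) / 4 \<le> opt_all (Suc m) {..<Suc m} id action_cost reward"
  using principal_utility_le_opt_all[OF valid_instance unequal_contract_is_contract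
      unequal_contract_NE]
  by (simp add: unequal_contract_utility)

lemma NE_expensive_agent_needs_all_cheap:
  assumes NE: "is_NE (Suc m) {..<Suc m} id action_cost reward \<alpha> S"
    and "m \<in> S" "0 < cheap_count S"
  shows "{..<m} \<subseteq> S"
proof (rule cheap_count_eq_m, rule ccontr)
  assume "cheap_count S \<noteq> m"
  with cheap_count_le have "cheap_count S < m" by (simp add: le_neq_implies_less)
  then have "reward (S - {m}) = reward S"
    using assms(3) by (simp add: reward_def cheap_count_remove_expensive reward_count_pos)
  then have "action_cost m \<le> 0" using NE_single_action_removal[OF NE \<open>m \<in> S\<close>] by simp
  then show False using l_less_U by (simp add: action_cost_def)
qed

lemma NE_equal_pay_expensive_agent:
  assumes "is_contract (Suc m) \<alpha>" "equal_pay (Suc m) \<alpha>"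
    and NE: "is_NE (Suc m) {..<Suc m} id action_cost reward \<alpha> S"
    and "m \<in> S" "{..<m} \<subseteq> S"
  shows "1 \<le> (\<Sum>i<Suc m. \<alpha> i)"
proof -
  have "S = {..<Suc m}"
    using NE_single_action_subset[OF NE] assms(4,5) by (auto simp: less_Suc_eq)
  moreover have "0 \<in> S" using assms(5) two_le_m by auto
  ultimately have "(U - l) / 2 \<le> \<alpha> m * (U - l)" "U / (4 * real m) \<le> \<alpha> 0 * U"
    using NE_single_action_removal[OF NE \<open>m \<in> S\<close>] NE_single_action_removal[OF NE \<open>0 \<in> S\<close>]
      two_le_m
    by (simp_all add: action_cost_def reward_full reward_full_remove_expensive
        reward_full_remove_cheap algebra_simps)
  moreover have "0 < U / (4 * real m)" using l_pos l_less_U two_le_m by simp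
  ultimately have "1/2 \<le> \<alpha> m" "\<alpha> 0 \<noteq> 0"
    using l_less_U by (auto simp: mult.commute[of _ "U - l"] pos_divide_le_eq)
  then have "\<alpha> 0 = \<alpha> m"
    using \<open>equal_pay (Suc m) \<alpha>\<close> unfolding equal_pay_def by force
  have "(\<Sum>i\<in>{0, m}. \<alpha> i) \<le> (\<Sum>i<Suc m. \<alpha> i)"
    using \<open>is_contract (Suc m) \<alpha>\<close> unfolding is_contract_def by (intro sum_mono2) auto
  then show ?thesis
    using two_le_m \<open>1/2 \<le> \<alpha> m\<close> \<open>\<alpha> 0 = \<alpha> m\<close> by simp
qed

lemma NE_without_expensive_agent:
  assumes "is_contract (Suc m) \<alpha>"
    and NE: "is_NE (Suc m) {..<Suc m} id action_cost reward \<alpha> S"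
    and "m \<notin> S" "2 \<le> cheap_count S" "(\<Sum>i<Suc m. \<alpha> i) < 1"
  shows "reward S < U + 4 * real m * l\<^sup>2 / U"
proof -
  define x where "x = cheap_count S"
  have "S \<subseteq> {..<m}"
    using NE_single_action_subset[OF NE] \<open>m \<notin> S\<close> by (auto simp: less_Suc_eq)
  then have x_card: "x = card S" and "finite S"
    unfolding x_def cheap_count_def by (auto simp: Int_absorb2 finite_subset)
  have reward_S: "reward S = U + l * (real x - 1)"
    using assms(3,4) cheap_count_le by (simp add: reward_def reward_count_pos x_def)
  have "U / (4 * real m) \<le> \<alpha> i * l" if "i \<in> S" for i
  proof -
    have "i < m" using that \<open>S \<subseteq> {..<m}\<close> by auto
    then have "cheap_count (S - {i}) = x - 1" using that by (simp add: cheap_count_remove_cheap x_def)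
    then have "reward (S - {i}) = U + l * (real x - 2)"
      using assms(3,4) cheap_count_le[of S] unfolding x_def
      by (simp add: reward_def reward_count_pos of_nat_diff algebra_simps)
    then have "reward S - reward (S - {i}) = l" using reward_S by (simp add: algebra_simps)
    then show ?thesis
      using NE_single_action_removal[OF NE that] \<open>i < m\<close> by (simp add: action_cost_def)
  qed
  then have "real x * (U / (4 * real m)) \<le> (\<Sum>i\<in>S. \<alpha> i) * l"
    using sum_mono[of S "\<lambda>_. U / (4 * real m)" "\<lambda>i. \<alpha> i * l"] x_card
    by (simp add: sum_distrib_right)
  also have "\<dots> \<le> (\<Sum>i<Suc m. \<alpha> i) * l"
    using \<open>S \<subseteq> {..<m}\<close> \<open>is_contract (Suc m) \<alpha>\<close> l_pos unfolding is_contract_def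
    by (intro mult_right_mono sum_mono2) auto
  also have "\<dots> < l" using assms(5) l_pos by simp
  finally have "l * real x < 4 * real m * l\<^sup>2 / U"
    using l_pos l_less_U two_le_m by (simp add: field_simps power2_eq_square)
  then show ?thesis using reward_S l_pos by (simp add: algebra_simps)
qed

lemma equal_pay_NE_utility_le:
  assumes "is_contract (Suc m) \<alpha>" "equal_pay (Suc m) \<alpha>"
    and NE: "is_NE (Suc m) {..<Suc m} id action_cost reward \<alpha> S"
  shows "principal_utility (Suc m) reward \<alpha> S \<le> U + 4 * real m * l\<^sup>2 / U"
proof -
  have utility_le_reward: "principal_utility (Suc m) reward \<alpha> S \<le> reward S"
    using assms(1) by (intro principal_utility_le_reward contract_sum_nonneg reward_nonneg)
  have U_le_bound: "U \<le> U + 4 * real m * l\<^sup>2 / U" using l_pos l_less_U by simp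
  consider "reward S \<le> U" | "1 \<le> (\<Sum>i<Suc m. \<alpha> i)"
    | "U < reward S" "(\<Sum>i<Suc m. \<alpha> i) < 1" by linarith
  then show ?thesis
  proof cases
    case 1
    then show ?thesis using utility_le_reward U_le_bound by linarith
  next
    case 2
    have "principal_utility (Suc m) reward \<alpha> S \<le> 0"
      using 2 reward_nonneg by (rule principal_utility_nonpos)
    then show ?thesis using U_le_bound l_pos l_less_U by linarith
  next
    case 3
    have "2 \<le> cheap_count S"
    proof (rule ccontr)
      assume "\<not> 2 \<le> cheap_count S"
      then have "cheap_count S = 0 \<or> cheap_count S = 1" by auto
      then have "reward S \<le> U"
        using two_le_m l_pos l_less_U by (auto simp: reward_def reward_count_zero reward_count_pos)
      with 3 show False by simp
    qed
    moreover have "m \<notin> S"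
      using NE_expensive_agent_needs_all_cheap[OF NE] NE_equal_pay_expensive_agent[OF assms] 3
        \<open>2 \<le> cheap_count S\<close> by force
    ultimately show ?thesis
      using NE_without_expensive_agent[OF assms(1) NE] 3 utility_le_reward by fastforce
  qed
qed

lemma opt_equal_upper_bound:
  "opt_equal (Suc m) {..<Suc m} id action_cost reward \<le> U + 4 * real m * l\<^sup>2 / U"
  by (rule opt_equal_le_if_NE_utility_le[OF valid_instance equal_pay_NE_utility_le])

end

lemma sqrt_gap_parameters:
  fixes n :: nat
  assumes "16 \<le> n"
  defines "m \<equiv> n - 1" and "U \<equiv> 1 / sqrt n" and "l \<equiv> 1 / (4 * real n)"
  shows "sqrt_gap_instance m U l"
    and "1/32 \<le> (2 * U + l * (real m - 2)) / 4"
    and "U + 4 * real m * l\<^sup>2 / U \<le> 5 / (4 * sqrt n)"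
proof -
  define s where "s = sqrt n"
  have "sqrt (4\<^sup>2) \<le> s" unfolding s_def using assms(1) by (intro real_sqrt_le_mono) simp
  then have s: "4 \<le> s" by simp
  have s_sq: "s * s = real n" unfolding s_def by simp
  have "s * 1 \<le> s * s" using s by (intro mult_left_mono) auto
  then have s_le_n: "s \<le> real n" using s_sq by simp
  have m: "real m = real n - 1" unfolding m_def using assms(1) by simp
  have l_m: "1/8 \<le> l * (real m - 2)" "l * (real m - 2) \<le> 1/4"
    unfolding l_def m using assms(1) by (simp_all add: field_simps)
  have U: "U = 1 / s" unfolding U_def s_def ..
  have "2 * U \<le> 1/2" "l < U" "0 < U" unfolding U l_def using s s_le_n by (simp_all add: field_simps)
  moreover have "2 \<le> m" "0 < l" unfolding m_def l_def using assms(1) by simp_all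
  ultimately show "sqrt_gap_instance m U l"
    using l_m(2) by unfold_locales linarith+
  show "1/32 \<le> (2 * U + l * (real m - 2)) / 4" using l_m(1) \<open>0 < U\<close> by (simp add: divide_simps)
  have "4 * real m * l\<^sup>2 / U \<le> 4 * real n * l\<^sup>2 / U"
    using m s unfolding U by (intro divide_right_mono mult_right_mono) auto
  also have "\<dots> = 1 / (4 * s)"
    unfolding U l_def using s s_sq assms(1) by (simp add: field_simps power2_eq_square)
  finally show "U + 4 * real m * l\<^sup>2 / U \<le> 5 / (4 * sqrt n)"
    unfolding U s_def[symmetric] using s by (simp add: field_simps)
qed

theorem proposition5p9:
  shows "\<exists>C>0. \<exists>N. \<forall>n\<ge>N. \<exists>T owner c f.
           valid_instance n T owner c f \<and> subadditive_on T f \<and>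
           opt_all n T owner c f > 0 \<and>
           C * sqrt (real n) * opt_equal n T owner c f \<le> opt_all n T owner c f"
proof (intro exI[of _ "1/40"] conjI exI[of _ "16::nat"] allI impI)
  fix n :: nat
  assume n: "16 \<le> n"
  define m where "m = n - 1"
  have n_Suc: "n = Suc m" using n unfolding m_def by simp
  interpret sqrt_gap_instance m "1 / sqrt n" "1 / (4 * real n)"
    using sqrt_gap_parameters(1)[OF n, folded m_def] .
  let ?opt_all = "opt_all n {..<n} id action_cost reward"
  let ?opt_equal = "opt_equal n {..<n} id action_cost reward"
  have lower: "1/32 \<le> ?opt_all"
    using sqrt_gap_parameters(2)[OF n, folded m_def] opt_all_lower_bound[folded n_Suc] by linarith
  have "?opt_equal \<le> 5 / (4 * sqrt n)"
    using sqrt_gap_parameters(3)[OF n, folded m_def] opt_equal_upper_bound[folded n_Suc] by linarith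
  then have "1/40 * sqrt n * ?opt_equal \<le> 1/40 * sqrt n * (5 / (4 * sqrt n))"
    by (intro mult_left_mono) auto
  also have "\<dots> = 1/32" using n by simp
  finally have "1/40 * sqrt n * ?opt_equal \<le> ?opt_all" using lower by linarith
  moreover have "valid_instance n {..<n} id action_cost reward" "subadditive_on {..<n} reward"
    using valid_instance subadditive unfolding n_Suc .
  moreover have "0 < ?opt_all" using lower by linarith
  ultimately show "\<exists>T owner c f. valid_instance n T owner c f \<and> subadditive_on T f \<and>
      opt_all n T owner c f > 0 \<and> 1/40 * sqrt n * opt_equal n T owner c f \<le> opt_all n T owner c f"
    by blast
qed simp

end
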